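(* Let $l\ge 4$ be an integer, let $G_1$ be any graph (possibly a loopless multigraph), and let $G=K_1\vee (P_l\cup G_1)$. Then: (i) if $l\ge 5$, then for every $s$ with $3\le s\le l-2$, $$\sigma_1(G)<\sigma_1\big(K_1\vee(C_s\cup P_{l-s}\cup G_1)\big);$$ (ii) if $l=4$, then $\sigma_1(G)<\sigma_1\big(K_1\vee(C_2\cup P_2\cup G_1)\big)$, where $C_2$ is the digon.
   Context: $P_l$ is the path and $C_s$ the cycle on $l$ resp. $s$ vertices; $C_2$ is the digon (two vertices joined by two parallel edges). For loopless multigraphs the degree of a vertex is the number of incident edges and the $(u,v)$ entry of the adjacency matrix $A$ is the number of edges between $u$ and $v$. $Q=A+D$, $D$ the diagonal degree matrix, and $\sigma_1$ denotes the largest eigenvalue of $Q$. $K_1\vee H$ adds one vertex adjacent to every vertex of $H$; $\cup$ is disjoint union. *)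

theory Defs
  imports "Jordan_Normal_Form.Char_Poly"
begin

text \<open>Loopless multigraphs on vertex set {0..<n}, given by an edge-multiplicity
  function w :: nat => nat => nat (w i j = number of edges between i and j).\<close>

definition multigraph :: "nat \<Rightarrow> (nat \<Rightarrow> nat \<Rightarrow> nat) \<Rightarrow> bool" where
  "multigraph n w \<longleftrightarrow> (\<forall>i j. w i j = w j i) \<and> (\<forall>i. w i i = 0)
     \<and> (\<forall>i j. n \<le> i \<or> n \<le> j \<longrightarrow> w i j = 0)"

definition mdegree :: "nat \<Rightarrow> (nat \<Rightarrow> nat \<Rightarrow> nat) \<Rightarrow> nat \<Rightarrow> nat" where
  "mdegree n w i = (\<Sum>j<n. w i j)"

definition adj_mat :: "nat \<Rightarrow> (nat \<Rightarrow> nat \<Rightarrow> nat) \<Rightarrow> real mat" where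
  "adj_mat n w = mat n n (\<lambda>(i,j). real (w i j))"

definition deg_mat :: "nat \<Rightarrow> (nat \<Rightarrow> nat \<Rightarrow> nat) \<Rightarrow> real mat" where
  "deg_mat n w = mat n n (\<lambda>(i,j). if i = j then real (mdegree n w i) else 0)"

definition signless_lap :: "nat \<Rightarrow> (nat \<Rightarrow> nat \<Rightarrow> nat) \<Rightarrow> real mat" where
  "signless_lap n w = adj_mat n w + deg_mat n w"

definition largest_eig :: "real mat \<Rightarrow> real" where
  "largest_eig M = Max {k. eigenvalue M k}"

definition sigma1 :: "nat \<Rightarrow> (nat \<Rightarrow> nat \<Rightarrow> nat) \<Rightarrow> real" where
  "sigma1 n w = largest_eig (signless_lap n w)"

definition path_g :: "nat \<Rightarrow> nat \<Rightarrow> nat \<Rightarrow> nat" where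
  "path_g l i j = (if i < l \<and> j < l \<and> (i + 1 = j \<or> j + 1 = i) then 1 else 0)"

text \<open>Cycle C_s on vertices 0..s-1 (s >= 2); for s = 2 this is the digon
  (two parallel edges between 0 and 1).\<close>
definition cycle_g :: "nat \<Rightarrow> nat \<Rightarrow> nat \<Rightarrow> nat" where
  "cycle_g s i j = (if i < s \<and> j < s \<and> i \<noteq> j then
      (if (i + 1) mod s = j then 1 else 0) + (if (j + 1) mod s = i then 1 else 0) else 0)"

definition dunion :: "nat \<Rightarrow> (nat \<Rightarrow> nat \<Rightarrow> nat) \<Rightarrow> (nat \<Rightarrow> nat \<Rightarrow> nat) \<Rightarrow> nat \<Rightarrow> nat \<Rightarrow> nat" where
  "dunion n1 w1 w2 i j = (if i < n1 \<and> j < n1 then w1 i j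
      else if n1 \<le> i \<and> n1 \<le> j then w2 (i - n1) (j - n1) else 0)"

text \<open>K_1 join H, H on n vertices: new vertex 0, vertices of H shifted by one.\<close>
definition join1 :: "nat \<Rightarrow> (nat \<Rightarrow> nat \<Rightarrow> nat) \<Rightarrow> nat \<Rightarrow> nat \<Rightarrow> nat" where
  "join1 n w i j = (if i = 0 \<and> j = 0 then 0
      else if i = 0 then (if j \<le> n then 1 else 0)
      else if j = 0 then (if i \<le> n then 1 else 0)
      else w (i - 1) (j - 1))"

end

theory Submission
  imports Defs "HOL-Analysis.Function_Topology"
begin

text \<open>
  Let y be a Perron vector of the signless Laplacian of \<open>G = K\<^sub>1 \<or> (P\<^sub>l \<union> G\<^sub>1)\<close>.
  Averaging \<open>\<bar>y\<bar>\<close> with its mirror image along the path gives an eigenvector for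
  \<open>\<sigma>\<^sub>1(G)\<close> that is positive at the apex and symmetric on the path; the eigenvalue
  equations force it to be strictly concave on the path, hence strictly increasing towards
  the middle. Now move a centred segment of s path vertices onto the cycle \<open>C\<^sub>s\<close>, keeping the
  values of y. Of the quadratic form \<open>x\<^sup>T Q x = \<Sum>\<^bsub>uv\<in>E\<^esub> (x\<^sub>u + x\<^sub>v)\<^sup>2\<close> only four
  edge terms change: if the path reads \<open>\<dots> a | c \<dots> b | d \<dots>\<close> around the segment
  \<open>c \<dots> b\<close>, the edges \<open>ac, bd\<close> are replaced by \<open>ad, bc\<close>, which adds
  \<open>2 (b - a) (c - d) \<ge> 0\<close>. Hence \<open>\<sigma>\<^sub>1(G) \<le> \<sigma>\<^sub>1(G')\<close> by the Rayleigh principle.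
  Equality would make the rearranged vector an eigenvector of \<open>G'\<close>; its eigenvalue equation
  at the vertex carrying a then forces \<open>c = d\<close>, contradicting the strict monotonicity of y.
\<close>

definition quad_form :: "(nat \<Rightarrow> nat \<Rightarrow> real) \<Rightarrow> nat \<Rightarrow> (nat \<Rightarrow> real) \<Rightarrow> real" where
  "quad_form M n x = (\<Sum>i<n. \<Sum>j<n. M i j * x i * x j)"

definition sqnorm :: "nat \<Rightarrow> (nat \<Rightarrow> real) \<Rightarrow> real" where
  "sqnorm n x = (\<Sum>i<n. (x i)\<^sup>2)"

definition mat_vec :: "(nat \<Rightarrow> nat \<Rightarrow> real) \<Rightarrow> nat \<Rightarrow> (nat \<Rightarrow> real) \<Rightarrow> nat \<Rightarrow> real" where
  "mat_vec M n x i = (\<Sum>j<n. M i j * x j)"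

definition symmetric_on :: "nat \<Rightarrow> (nat \<Rightarrow> nat \<Rightarrow> 'a) \<Rightarrow> bool" where
  "symmetric_on n M \<longleftrightarrow> (\<forall>i<n. \<forall>j<n. M i j = M j i)"

lemma quad_form_eq_sum_mat_vec: "quad_form M n x = (\<Sum>i<n. x i * mat_vec M n x i)"
  unfolding quad_form_def mat_vec_def by (simp add: sum_distrib_left mult_ac)

lemma quad_form_cong: "(\<And>i. i < n \<Longrightarrow> x i = y i) \<Longrightarrow> quad_form M n x = quad_form M n y"
  unfolding quad_form_def by (intro sum.cong refl) auto

lemma sqnorm_cong: "(\<And>i. i < n \<Longrightarrow> x i = y i) \<Longrightarrow> sqnorm n x = sqnorm n y"
  unfolding sqnorm_def by (intro sum.cong refl) auto

lemma quad_form_scale: "quad_form M n (\<lambda>i. c * x i) = c\<^sup>2 * quad_form M n x"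
  unfolding quad_form_def by (simp add: sum_distrib_left power2_eq_square mult_ac)

lemma sqnorm_scale: "sqnorm n (\<lambda>i. c * x i) = c\<^sup>2 * sqnorm n x"
  unfolding sqnorm_def by (simp add: sum_distrib_left power_mult_distrib)

lemma sqnorm_nonneg: "0 \<le> sqnorm n x"
  unfolding sqnorm_def by (simp add: sum_nonneg)

lemma sqnorm_eq_0_iff: "sqnorm n x = 0 \<longleftrightarrow> (\<forall>i<n. x i = 0)"
  unfolding sqnorm_def by (auto simp: sum_nonneg_eq_0_iff)

lemma sqnorm_pos_iff: "0 < sqnorm n x \<longleftrightarrow> (\<exists>i<n. x i \<noteq> 0)"
  using sqnorm_nonneg[of n x] sqnorm_eq_0_iff[of n x] by (auto simp: less_le)

lemma quad_form_eigen:
  "(\<forall>i<n. mat_vec M n x i = \<rho> * x i) \<Longrightarrow> quad_form M n x = \<rho> * sqnorm n x"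
  unfolding quad_form_eq_sum_mat_vec sqnorm_def
  by (simp add: sum_distrib_left power2_eq_square mult_ac)

lemma quad_form_add_scaled:
  assumes "symmetric_on n M"
  shows "quad_form M n (\<lambda>i. x i + t * z i)
    = quad_form M n x + 2 * t * (\<Sum>i<n. z i * mat_vec M n x i) + t\<^sup>2 * quad_form M n z"
proof -
  have swap: "(\<Sum>i<n. \<Sum>j<n. M i j * x i * z j) = (\<Sum>i<n. z i * mat_vec M n x i)"
    unfolding mat_vec_def sum_distrib_left
    by (subst sum.swap) (use assms in \<open>auto simp: symmetric_on_def mult_ac intro!: sum.cong\<close>)
  have "quad_form M n (\<lambda>i. x i + t * z i) = quad_form M n x
      + t * (\<Sum>i<n. \<Sum>j<n. M i j * z i * x j) + t * (\<Sum>i<n. \<Sum>j<n. M i j * x i * z j)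
      + t\<^sup>2 * quad_form M n z"
    unfolding quad_form_def
    by (simp add: algebra_simps power2_eq_square sum.distrib sum_distrib_left)
  also have "(\<Sum>i<n. \<Sum>j<n. M i j * z i * x j) = (\<Sum>i<n. z i * mat_vec M n x i)"
    unfolding mat_vec_def by (simp add: sum_distrib_left mult_ac)
  finally show ?thesis using swap by simp
qed

lemma sqnorm_add_scaled:
  "sqnorm n (\<lambda>i. x i + t * z i) = sqnorm n x + 2 * t * (\<Sum>i<n. z i * x i) + t\<^sup>2 * sqnorm n z"
  unfolding sqnorm_def
  by (simp add: power2_eq_square algebra_simps sum.distrib sum_distrib_left)

lemma quadratic_nonneg_imp_linear_coeff_0:
  fixes a b :: real
  assumes "\<And>t. 0 \<le> a * t + b * t\<^sup>2"
  shows "a = 0"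
proof (rule ccontr)
  assume "a \<noteq> 0"
  define c where "c = \<bar>b\<bar> + 1"
  have "0 < c" "0 < c - b"
    unfolding c_def by linarith+
  have "a * (- a / c) + b * (- a / c)\<^sup>2 = - a\<^sup>2 * (c - b) / c\<^sup>2"
    using \<open>0 < c\<close> by (simp add: field_simps power2_eq_square)
  also have "\<dots> < 0"
    using \<open>a \<noteq> 0\<close> \<open>0 < c\<close> \<open>0 < c - b\<close> by (simp add: divide_neg_pos)
  finally show False using assms[of "- a / c"] by simp
qed

text \<open>Perturbing x in the direction of the residual \<open>\<rho> x - M x\<close> preserves the Rayleigh
  bound only if the residual vanishes.\<close>

lemma rayleigh_eq_imp_eigen:
  assumes sym: "symmetric_on n M" and bound: "\<And>y. quad_form M n y \<le> \<rho> * sqnorm n y"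
    and eq: "quad_form M n x = \<rho> * sqnorm n x" and "i < n"
  shows "mat_vec M n x i = \<rho> * x i"
proof -
  define z where "z i = \<rho> * x i - mat_vec M n x i" for i
  have "0 \<le> 2 * sqnorm n z * t + (\<rho> * sqnorm n z - quad_form M n z) * t\<^sup>2" for t
  proof -
    have "0 \<le> \<rho> * sqnorm n (\<lambda>i. x i + t * z i) - quad_form M n (\<lambda>i. x i + t * z i)"
      using bound by simp
    also have "\<dots> = 2 * t * (\<Sum>i<n. z i * (\<rho> * x i - mat_vec M n x i))
        + t\<^sup>2 * (\<rho> * sqnorm n z - quad_form M n z)"
      unfolding quad_form_add_scaled[OF sym] sqnorm_add_scaled using eq
      by (simp add: algebra_simps sum_subtractf sum_distrib_left)
    also have "(\<Sum>i<n. z i * (\<rho> * x i - mat_vec M n x i)) = sqnorm n z"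
      unfolding sqnorm_def z_def by (simp add: power2_eq_square)
    finally show ?thesis by (simp add: mult_ac)
  qed
  then have "2 * sqnorm n z = 0"
    by (rule quadratic_nonneg_imp_linear_coeff_0)
  then have "z i = 0"
    using \<open>i < n\<close> sqnorm_eq_0_iff[of n z] by simp
  then show ?thesis
    unfolding z_def by simp
qed

lemma compact_unit_sphere:
  "compact {x :: nat \<Rightarrow> real. (\<forall>i\<ge>n. x i = 0) \<and> sqnorm n x = 1}"
proof -
  define B where "B = PiE UNIV (\<lambda>i. if i < n then {-1..1::real} else {0})"
  have "compactin (product_topology (\<lambda>_. euclideanreal) UNIV) B"
    unfolding B_def by (subst compactin_PiE) auto
  then have "compact B"
    by (simp add: euclidean_product_topology)
  moreover have "closed {x :: nat \<Rightarrow> real. sqnorm n x = 1}"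
    unfolding sqnorm_def
    by (intro closed_Collect_eq continuous_intros continuous_on_product_coordinates)
  moreover have "{x. (\<forall>i\<ge>n. x i = 0) \<and> sqnorm n x = 1} = B \<inter> {x. sqnorm n x = 1}"
  proof -
    have "\<bar>x i\<bar> \<le> 1" if "sqnorm n x = 1" "i < n" for x i
    proof -
      have "(x i)\<^sup>2 \<le> sqnorm n x"
        unfolding sqnorm_def using that(2) by (intro member_le_sum) auto
      then show ?thesis using that(1) by (simp add: abs_square_le_1)
    qed
    then show ?thesis
      unfolding B_def by (auto simp: PiE_def Pi_def abs_le_iff split: if_splits)
  qed
  ultimately show ?thesis by (simp add: compact_Int_closed)
qed

lemma rayleigh_max_exists:
  assumes "0 < n"
  obtains x where "sqnorm n x = 1" and "\<And>y. quad_form M n y \<le> quad_form M n x * sqnorm n y"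
proof -
  define S where "S = {x :: nat \<Rightarrow> real. (\<forall>i\<ge>n. x i = 0) \<and> sqnorm n x = 1}"
  have "sqnorm n (\<lambda>i. if i = 0 then 1 else 0) = (\<Sum>i<n. if i = 0 then 1 else 0)"
    unfolding sqnorm_def by (intro sum.cong) auto
  then have "(\<lambda>i. if i = 0 then 1 else 0) \<in> S"
    using assms unfolding S_def by simp
  moreover have "continuous_on S (quad_form M n)"
    unfolding quad_form_def
    by (intro continuous_intros continuous_on_subset[OF continuous_on_product_coordinates]) auto
  ultimately obtain x where "x \<in> S" and x_max: "\<And>y. y \<in> S \<Longrightarrow> quad_form M n y \<le> quad_form M n x"
    using continuous_attains_sup[OF compact_unit_sphere[of n, folded S_def]] by blast
  have "quad_form M n y \<le> quad_form M n x * sqnorm n y" for y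
  proof (cases "sqnorm n y = 0")
    case True
    then have "quad_form M n y = quad_form M n (\<lambda>_. 0)"
      by (intro quad_form_cong) (simp add: sqnorm_eq_0_iff)
    then show ?thesis using True by (simp add: quad_form_def)
  next
    case False
    define c where "c = 1 / sqrt (sqnorm n y)"
    have c2: "c\<^sup>2 * sqnorm n y = 1" "0 < c\<^sup>2"
      using False sqnorm_nonneg[of n y] unfolding c_def by (simp_all add: power_divide)
    define y' where "y' i = (if i < n then c * y i else 0)" for i
    have "sqnorm n y' = 1" and "quad_form M n y' = c\<^sup>2 * quad_form M n y"
      using c2 sqnorm_cong[of n y' "\<lambda>i. c * y i"] quad_form_cong[of n y' "\<lambda>i. c * y i"]
      by (simp_all add: y'_def sqnorm_scale quad_form_scale)
    then have "c\<^sup>2 * quad_form M n y \<le> quad_form M n x * (c\<^sup>2 * sqnorm n y)"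
      using x_max[of y'] c2(1) by (simp add: S_def y'_def)
    then have "c\<^sup>2 * quad_form M n y \<le> c\<^sup>2 * (quad_form M n x * sqnorm n y)"
      by (simp add: mult_ac)
    then show ?thesis
      using c2(2) by simp
  qed
  then show ?thesis using that \<open>x \<in> S\<close> unfolding S_def by blast
qed

lemma mult_mat_vec_eq_mat_vec:
  assumes "A \<in> carrier_mat n n" and "i < n"
  shows "(A *\<^sub>v vec n x) $ i = mat_vec (\<lambda>i j. A $$ (i, j)) n x i"
  using assms unfolding mat_vec_def by (simp add: scalar_prod_def mult_ac atLeast0LessThan)

lemma eigenvalue_iff_mat_vec:
  assumes A: "A \<in> carrier_mat n n"
  shows "eigenvalue A k \<longleftrightarrow>
    (\<exists>x. (\<exists>i<n. x i \<noteq> 0) \<and> (\<forall>i<n. mat_vec (\<lambda>i j. A $$ (i, j)) n x i = k * x i))"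
proof
  assume "eigenvalue A k"
  then obtain v where v: "v \<in> carrier_vec n" "v \<noteq> 0\<^sub>v n" "A *\<^sub>v v = k \<cdot>\<^sub>v v"
    using A unfolding eigenvalue_def eigenvector_def by auto
  have v_eq: "v = vec n (\<lambda>i. v $ i)"
    using v(1) by auto
  have "\<exists>i<n. v $ i \<noteq> 0"
    using v(1,2) by (auto simp: vec_eq_iff)
  moreover have "mat_vec (\<lambda>i j. A $$ (i, j)) n (\<lambda>i. v $ i) i = k * v $ i" if "i < n" for i
  proof -
    have "mat_vec (\<lambda>i j. A $$ (i, j)) n (\<lambda>i. v $ i) i = (A *\<^sub>v v) $ i"
      using mult_mat_vec_eq_mat_vec[OF A that, of "\<lambda>i. v $ i"] by (simp flip: v_eq)
    then show ?thesis
      using v(1,3) that by simp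
  qed
  ultimately show "\<exists>x. (\<exists>i<n. x i \<noteq> 0) \<and> (\<forall>i<n. mat_vec (\<lambda>i j. A $$ (i, j)) n x i = k * x i)"
    by blast
next
  assume "\<exists>x. (\<exists>i<n. x i \<noteq> 0) \<and> (\<forall>i<n. mat_vec (\<lambda>i j. A $$ (i, j)) n x i = k * x i)"
  then obtain x where x: "\<exists>i<n. x i \<noteq> 0" "\<forall>i<n. mat_vec (\<lambda>i j. A $$ (i, j)) n x i = k * x i"
    by blast
  have "vec n x \<noteq> 0\<^sub>v n"
    using x(1) by (auto simp: vec_eq_iff)
  moreover have "A *\<^sub>v vec n x = k \<cdot>\<^sub>v vec n x"
    using A x(2) mult_mat_vec_eq_mat_vec[OF A] by (intro eq_vecI) auto
  ultimately show "eigenvalue A k"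
    using A unfolding eigenvalue_def eigenvector_def by (metis carrier_matD(1) vec_carrier)
qed

lemma finite_eigenvalues:
  assumes "(A :: 'a :: field mat) \<in> carrier_mat n n"
  shows "finite {k. eigenvalue A k}"
proof -
  have "char_poly A \<noteq> 0"
    using degree_monic_char_poly[OF assms] by auto
  then show ?thesis
    using poly_roots_finite eigenvalue_root_char_poly[OF assms] by simp
qed

lemma largest_eig_rayleigh:
  assumes A: "A \<in> carrier_mat n n" and sym: "symmetric_on n (\<lambda>i j. A $$ (i, j))" and "0 < n"
  shows "\<exists>x. (\<exists>i<n. x i \<noteq> 0) \<and> (\<forall>i<n. mat_vec (\<lambda>i j. A $$ (i, j)) n x i = largest_eig A * x i)"
    and "quad_form (\<lambda>i j. A $$ (i, j)) n y \<le> largest_eig A * sqnorm n y"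
proof -
  let ?M = "\<lambda>i j. A $$ (i, j)"
  obtain x where x: "sqnorm n x = 1" and bound: "\<And>y. quad_form ?M n y \<le> quad_form ?M n x * sqnorm n y"
    using rayleigh_max_exists[OF \<open>0 < n\<close>] by blast
  define \<rho> where "\<rho> = quad_form ?M n x"
  have x_eigen: "\<forall>i<n. mat_vec ?M n x i = \<rho> * x i"
    using rayleigh_eq_imp_eigen[OF sym bound] x unfolding \<rho>_def by simp
  have x_nz: "\<exists>i<n. x i \<noteq> 0"
    using x sqnorm_pos_iff[of n x] by simp
  have "largest_eig A = \<rho>"
    unfolding largest_eig_def
  proof (rule Max_eqI[OF finite_eigenvalues[OF A]])
    fix k
    assume "k \<in> {k. eigenvalue A k}"
    then obtain z where "\<exists>i<n. z i \<noteq> 0" "\<forall>i<n. mat_vec ?M n z i = k * z i"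
      using eigenvalue_iff_mat_vec[OF A] by auto
    then have "k * sqnorm n z \<le> \<rho> * sqnorm n z" "0 < sqnorm n z"
      using bound[of z] quad_form_eigen[of n ?M z k] sqnorm_pos_iff[of n z]
      by (simp_all add: \<rho>_def)
    then show "k \<le> \<rho>"
      by simp
  qed (use x_eigen x_nz eigenvalue_iff_mat_vec[OF A] in auto)
  then show "\<exists>x. (\<exists>i<n. x i \<noteq> 0) \<and> (\<forall>i<n. mat_vec ?M n x i = largest_eig A * x i)"
    and "quad_form ?M n y \<le> largest_eig A * sqnorm n y"
    using x_eigen x_nz bound[of y] x by (auto simp: \<rho>_def)
qed

definition adj_sum :: "nat \<Rightarrow> (nat \<Rightarrow> nat \<Rightarrow> nat) \<Rightarrow> (nat \<Rightarrow> real) \<Rightarrow> nat \<Rightarrow> real" where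
  "adj_sum n w x i = (\<Sum>j<n. real (w i j) * x j)"

definition signless_form :: "nat \<Rightarrow> (nat \<Rightarrow> nat \<Rightarrow> nat) \<Rightarrow> (nat \<Rightarrow> real) \<Rightarrow> real" where
  "signless_form n w x = (\<Sum>i<n. \<Sum>j<n. real (w i j) * (x i + x j)\<^sup>2) / 2"

definition signless_eigen :: "nat \<Rightarrow> (nat \<Rightarrow> nat \<Rightarrow> nat) \<Rightarrow> real \<Rightarrow> (nat \<Rightarrow> real) \<Rightarrow> bool" where
  "signless_eigen n w \<rho> x \<longleftrightarrow> (\<forall>i<n. real (mdegree n w i) * x i + adj_sum n w x i = \<rho> * x i)"

lemma mdegree_eq_adj_sum: "real (mdegree n w i) = adj_sum n w (\<lambda>_. 1) i"
  unfolding mdegree_def adj_sum_def by simp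

lemma adj_sum_add: "adj_sum n w (\<lambda>j. x j + y j) i = adj_sum n w x i + adj_sum n w y i"
  unfolding adj_sum_def by (simp add: distrib_left sum.distrib)

lemma mat_vec_signless_lap:
  assumes "i < n"
  shows "mat_vec (\<lambda>i j. signless_lap n w $$ (i, j)) n x i
    = real (mdegree n w i) * x i + adj_sum n w x i"
proof -
  have "mat_vec (\<lambda>i j. signless_lap n w $$ (i, j)) n x i
      = (\<Sum>j<n. real (w i j) * x j + (if i = j then real (mdegree n w i) * x j else 0))"
    unfolding mat_vec_def signless_lap_def adj_mat_def deg_mat_def
    using assms by (intro sum.cong) (auto simp: algebra_simps)
  then show ?thesis
    using assms by (simp add: sum.distrib adj_sum_def)
qed

lemma quad_form_signless_lap:
  assumes "symmetric_on n w"
  shows "quad_form (\<lambda>i j. signless_lap n w $$ (i, j)) n x = signless_form n w x"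
proof -
  have swap: "(\<Sum>i<n. \<Sum>j<n. real (w i j) * (x j)\<^sup>2) = (\<Sum>i<n. \<Sum>j<n. real (w i j) * (x i)\<^sup>2)"
    using assms unfolding symmetric_on_def by (subst sum.swap) (auto intro!: sum.cong)
  have "quad_form (\<lambda>i j. signless_lap n w $$ (i, j)) n x
      = (\<Sum>i<n. \<Sum>j<n. real (w i j) * (x i)\<^sup>2) + (\<Sum>i<n. \<Sum>j<n. real (w i j) * x i * x j)"
    unfolding quad_form_eq_sum_mat_vec
    by (simp add: mat_vec_signless_lap mdegree_def adj_sum_def sum.distrib sum_distrib_left
        sum_distrib_right power2_eq_square algebra_simps)
  also have "\<dots> = signless_form n w x"
    unfolding signless_form_def using swap
    by (simp add: power2_eq_square algebra_simps sum.distrib sum_distrib_left)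
  finally show ?thesis .
qed

lemma signless_lap_carrier: "signless_lap n w \<in> carrier_mat n n"
  unfolding signless_lap_def adj_mat_def deg_mat_def by simp

lemma symmetric_on_signless_lap:
  "symmetric_on n w \<Longrightarrow> symmetric_on n (\<lambda>i j. signless_lap n w $$ (i, j))"
  unfolding symmetric_on_def signless_lap_def adj_mat_def deg_mat_def by auto

lemma signless_form_le_sigma1:
  assumes "symmetric_on n w" and "0 < n"
  shows "signless_form n w y \<le> sigma1 n w * sqnorm n y"
  using largest_eig_rayleigh(2)[OF signless_lap_carrier symmetric_on_signless_lap[OF assms(1)] assms(2)]
  by (simp add: sigma1_def quad_form_signless_lap[OF assms(1)])

lemma sigma1_eigenvector:
  assumes "symmetric_on n w" and "0 < n"
  shows "\<exists>x. (\<exists>i<n. x i \<noteq> 0) \<and> signless_eigen n w (sigma1 n w) x"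
  using largest_eig_rayleigh(1)[OF signless_lap_carrier symmetric_on_signless_lap[OF assms(1)] assms(2)]
  by (simp add: sigma1_def signless_eigen_def mat_vec_signless_lap)

lemma signless_form_edge_map:
  assumes I: "I \<subseteq> {..<n}" and f: "\<And>i. i \<in> I \<Longrightarrow> f i < n"
    and w: "\<And>i j. i < n \<Longrightarrow> j < n \<Longrightarrow>
      w i j = (if i \<in> I \<and> j = f i then 1 else 0) + (if j \<in> I \<and> i = f j then 1 else 0)"
  shows "signless_form n w x = (\<Sum>i\<in>I. (x i + x (f i))\<^sup>2)"
proof -
  define F where "F i j = (x i + x j)\<^sup>2" for i j
  have one_way: "(\<Sum>i<n. \<Sum>j<n. if i \<in> I \<and> j = f i then F i j else 0) = (\<Sum>i\<in>I. F i (f i))"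
  proof -
    have "(\<Sum>i<n. \<Sum>j<n. if i \<in> I \<and> j = f i then F i j else 0)
        = (\<Sum>i<n. if i \<in> I then F i (f i) else 0)"
      using f by (intro sum.cong refl) (auto simp: sum.delta')
    also have "\<dots> = (\<Sum>i\<in>I. F i (f i))"
      using I by (simp add: sum.If_cases Int_absorb1)
    finally show ?thesis .
  qed
  have "2 * signless_form n w x = (\<Sum>i<n. \<Sum>j<n. real (w i j) * F i j)"
    unfolding signless_form_def F_def by simp
  also have "\<dots> = (\<Sum>i<n. \<Sum>j<n. (if i \<in> I \<and> j = f i then F i j else 0)
      + (if j \<in> I \<and> i = f j then F j i else 0))"
    using w by (intro sum.cong refl) (simp add: F_def add.commute distrib_right)
  also have "\<dots> = 2 * (\<Sum>i\<in>I. F i (f i))"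
  proof -
    have "(\<Sum>i<n. \<Sum>j<n. if j \<in> I \<and> i = f j then F j i else 0) = (\<Sum>i\<in>I. F i (f i))"
      by (subst sum.swap) (rule one_way)
    then show ?thesis
      using one_way by (simp add: sum.distrib)
  qed
  finally show ?thesis
    unfolding F_def by simp
qed

lemma signless_form_path_sum: "signless_form L (path_g L) x = (\<Sum>t<L - 1. (x t + x (Suc t))\<^sup>2)"
  by (rule signless_form_edge_map) (auto simp: path_g_def)

lemma signless_form_cycle_sum:
  assumes "2 \<le> s"
  shows "signless_form s (cycle_g s) x = (\<Sum>t<s. (x t + x (Suc t mod s))\<^sup>2)"
proof (rule signless_form_edge_map)
  fix i j
  assume "i < s" "j < s"
  moreover have "Suc k mod s \<noteq> k" if "k < s" for k
    using assms that by (cases "Suc k = s") auto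
  ultimately show "cycle_g s i j = (if i \<in> {..<s} \<and> j = Suc i mod s then 1 else 0)
      + (if j \<in> {..<s} \<and> i = Suc j mod s then 1 else 0)"
    unfolding cycle_g_def by auto
qed simp_all

fun chain_sum :: "real list \<Rightarrow> real" where
  "chain_sum (a # b # xs) = (a + b)\<^sup>2 + chain_sum (b # xs)"
| "chain_sum _ = 0"

lemma chain_sum_append:
  "xs \<noteq> [] \<Longrightarrow> ys \<noteq> [] \<Longrightarrow> chain_sum (xs @ ys) = chain_sum xs + (last xs + hd ys)\<^sup>2 + chain_sum ys"
  by (induction xs rule: chain_sum.induct) (auto simp: neq_Nil_conv)

lemma chain_sum_map_upt: "chain_sum (map x [0..<L]) = (\<Sum>t<L - 1. (x t + x (Suc t))\<^sup>2)"
proof (induction L)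
  case (Suc L)
  show ?case
  proof (cases L)
    case (Suc K)
    have "chain_sum (map x [0..<Suc L]) = chain_sum (map x [0..<L]) + (x K + x L)\<^sup>2"
      using chain_sum_append[of "map x [0..<L]" "[x L]"] Suc by (simp add: last_map)
    then show ?thesis
      using Suc.IH Suc by simp
  qed simp
qed simp

lemma signless_form_path: "signless_form L (path_g L) x = chain_sum (map x [0..<L])"
  unfolding signless_form_path_sum chain_sum_map_upt ..

lemma signless_form_cycle:
  assumes "2 \<le> s"
  shows "signless_form s (cycle_g s) x = chain_sum (map x [0..<s] @ [x 0])"
proof -
  have "map x [0..<s] @ [x 0] = map (\<lambda>t. x (t mod s)) [0..<Suc s]"
    using assms by simp
  then have "chain_sum (map x [0..<s] @ [x 0]) = (\<Sum>t<s. (x (t mod s) + x (Suc t mod s))\<^sup>2)"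
    by (simp only: chain_sum_map_upt) simp
  then show ?thesis
    unfolding signless_form_cycle_sum[OF assms] by simp
qed

lemma sum_lessThan_add: "(\<Sum>i<a + (b::nat). f i) = (\<Sum>i<a. f i) + (\<Sum>i<b. f (a + i))"
  by (induction b) (simp_all add: add_ac)

lemma signless_form_dunion:
  "signless_form (n1 + n2) (dunion n1 H1 H2) x
    = signless_form n1 H1 x + signless_form n2 H2 (\<lambda>j. x (n1 + j))"
  unfolding signless_form_def by (simp add: sum_lessThan_add dunion_def sum.distrib add_divide_distrib)

lemma signless_form_join1:
  "signless_form (Suc N) (join1 N H) x
    = (\<Sum>j<N. (x 0 + x (Suc j))\<^sup>2) + signless_form N H (\<lambda>j. x (Suc j))"
proof -
  have apex: "(\<Sum>j<Suc N. real (join1 N H 0 j) * (x 0 + x j)\<^sup>2) = (\<Sum>j<N. (x 0 + x (Suc j))\<^sup>2)"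
    by (subst sum.lessThan_Suc_shift) (simp add: join1_def)
  have row: "(\<Sum>j<Suc N. real (join1 N H (Suc i) j) * (x (Suc i) + x j)\<^sup>2)
      = (x 0 + x (Suc i))\<^sup>2 + (\<Sum>j<N. real (H i j) * (x (Suc i) + x (Suc j))\<^sup>2)" if "i < N" for i
    using that by (subst sum.lessThan_Suc_shift) (simp add: join1_def add.commute)
  have "2 * signless_form (Suc N) (join1 N H) x
      = (\<Sum>i<Suc N. \<Sum>j<Suc N. real (join1 N H i j) * (x i + x j)\<^sup>2)"
    unfolding signless_form_def by simp
  also have "\<dots> = (\<Sum>j<Suc N. real (join1 N H 0 j) * (x 0 + x j)\<^sup>2)
        + (\<Sum>i<N. \<Sum>j<Suc N. real (join1 N H (Suc i) j) * (x (Suc i) + x j)\<^sup>2)"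
    by (rule sum.lessThan_Suc_shift)
  also have "\<dots> = 2 * ((\<Sum>j<N. (x 0 + x (Suc j))\<^sup>2) + signless_form N H (\<lambda>j. x (Suc j)))"
    unfolding apex signless_form_def by (simp add: row sum.distrib del: sum.lessThan_Suc)
  finally show ?thesis
    by simp
qed

lemma adj_sum_join1_0: "adj_sum (Suc N) (join1 N H) x 0 = (\<Sum>j<N. x (Suc j))"
  unfolding adj_sum_def by (subst sum.lessThan_Suc_shift) (simp add: join1_def)

lemma adj_sum_join1_Suc:
  "k < N \<Longrightarrow> adj_sum (Suc N) (join1 N H) x (Suc k) = x 0 + adj_sum N H (\<lambda>j. x (Suc j)) k"
  unfolding adj_sum_def by (subst sum.lessThan_Suc_shift) (simp add: join1_def)

lemma adj_sum_dunion_left: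
  "k < n1 \<Longrightarrow> adj_sum (n1 + n2) (dunion n1 H1 H2) x k = adj_sum n1 H1 x k"
  unfolding adj_sum_def by (simp add: sum_lessThan_add dunion_def)

lemma adj_sum_dunion_right:
  "adj_sum (n1 + n2) (dunion n1 H1 H2) x (n1 + k) = adj_sum n2 H2 (\<lambda>j. x (n1 + j)) k"
  unfolding adj_sum_def by (simp add: sum_lessThan_add dunion_def)

lemma adj_sum_path:
  assumes "k < L"
  shows "adj_sum L (path_g L) x k
    = (if 0 < k then x (k - 1) else 0) + (if Suc k < L then x (Suc k) else 0)"
proof -
  have "adj_sum L (path_g L) x k
      = (\<Sum>j<L. (if j = Suc k then x j else 0) + (if j = k - 1 \<and> 0 < k then x j else 0))"
    unfolding adj_sum_def using assms by (intro sum.cong refl) (auto simp: path_g_def)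
  then show ?thesis
    using assms by (simp add: sum.distrib sum.delta' cong: conj_cong)
qed

lemma symmetric_on_multigraph: "multigraph n w \<Longrightarrow> symmetric_on n w"
  unfolding multigraph_def symmetric_on_def by simp

lemma symmetric_on_path: "symmetric_on L (path_g L)"
  unfolding symmetric_on_def path_g_def by auto

lemma symmetric_on_cycle: "symmetric_on s (cycle_g s)"
  unfolding symmetric_on_def cycle_g_def by auto

lemma symmetric_on_dunion:
  "symmetric_on n1 H1 \<Longrightarrow> symmetric_on n2 H2 \<Longrightarrow> symmetric_on (n1 + n2) (dunion n1 H1 H2)"
  unfolding symmetric_on_def dunion_def by auto

lemma symmetric_on_join1: "symmetric_on N H \<Longrightarrow> symmetric_on (Suc N) (join1 N H)"
  unfolding symmetric_on_def join1_def by auto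

lemma symmetric_on_path_join:
  "symmetric_on m w1 \<Longrightarrow> symmetric_on (Suc (l + m)) (join1 (l + m) (dunion l (path_g l) w1))"
  by (intro symmetric_on_join1 symmetric_on_dunion symmetric_on_path)

lemma symmetric_on_cycle_path_join:
  assumes "s \<le> l" and "symmetric_on m w1"
  shows "symmetric_on (Suc (l + m))
    (join1 (l + m) (dunion s (cycle_g s) (dunion (l - s) (path_g (l - s)) w1)))"
proof -
  have "l + m = s + (l - s + m)"
    using assms(1) by simp
  then show ?thesis
    by (simp only:) (intro symmetric_on_join1 symmetric_on_dunion symmetric_on_path symmetric_on_cycle assms(2))
qed

lemma signless_form_eigen:
  assumes "symmetric_on n w" and "signless_eigen n w \<rho> x"
  shows "signless_form n w x = \<rho> * sqnorm n x"
  using assms quad_form_eigen[of n "\<lambda>i j. signless_lap n w $$ (i, j)" x \<rho>]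
  by (simp add: signless_eigen_def mat_vec_signless_lap flip: quad_form_signless_lap)

lemma signless_eigen_of_maximizer:
  assumes "symmetric_on n w" and "0 < n" and "signless_form n w x = sigma1 n w * sqnorm n x"
  shows "signless_eigen n w (sigma1 n w) x"
  unfolding signless_eigen_def
  using rayleigh_eq_imp_eigen[OF symmetric_on_signless_lap[OF assms(1)],
      of "sigma1 n w" x] assms
  by (simp add: quad_form_signless_lap signless_form_le_sigma1 mat_vec_signless_lap)

lemma sigma1_test_vector:
  assumes sym: "symmetric_on n w" and "0 < n" and "0 < sqnorm n z"
    and le: "\<rho> * sqnorm n z \<le> signless_form n w z"
  shows "\<rho> \<le> sigma1 n w" and "\<rho> = sigma1 n w \<Longrightarrow> signless_eigen n w \<rho> z"
proof -
  have ub: "signless_form n w z \<le> sigma1 n w * sqnorm n z"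
    by (rule signless_form_le_sigma1[OF sym \<open>0 < n\<close>])
  then show "\<rho> \<le> sigma1 n w"
    using le \<open>0 < sqnorm n z\<close> by (meson mult_right_le_imp_le order_trans)
  show "signless_eigen n w \<rho> z" if "\<rho> = sigma1 n w"
  proof -
    have "signless_form n w z = sigma1 n w * sqnorm n z"
      using le ub unfolding that by linarith
    then show ?thesis
      unfolding that by (rule signless_eigen_of_maximizer[OF sym \<open>0 < n\<close>])
  qed
qed

lemma signless_eigen_add:
  "signless_eigen n w \<rho> x \<Longrightarrow> signless_eigen n w \<rho> y \<Longrightarrow> signless_eigen n w \<rho> (\<lambda>i. x i + y i)"
  unfolding signless_eigen_def by (simp add: adj_sum_add algebra_simps)

lemma signless_eigenD:
  "signless_eigen n w \<rho> x \<Longrightarrow> i < n \<Longrightarrow> \<rho> * x i = adj_sum n w (\<lambda>_. 1) i * x i + adj_sum n w x i"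
  unfolding signless_eigen_def mdegree_eq_adj_sum by simp

lemma signless_form_abs_ge: "signless_form n w x \<le> signless_form n w (\<lambda>i. \<bar>x i\<bar>)"
  unfolding signless_form_def
proof (intro divide_right_mono sum_mono mult_left_mono)
  fix i j
  have "\<bar>x i + x j\<bar> \<le> \<bar>x i\<bar> + \<bar>x j\<bar>"
    by (rule abs_triangle_ineq)
  then show "(x i + x j)\<^sup>2 \<le> (\<bar>x i\<bar> + \<bar>x j\<bar>)\<^sup>2"
    by (metis abs_ge_zero abs_le_square_iff abs_of_nonneg add_nonneg_nonneg)
qed simp_all

definition involutive_automorphism :: "nat \<Rightarrow> (nat \<Rightarrow> nat \<Rightarrow> nat) \<Rightarrow> (nat \<Rightarrow> nat) \<Rightarrow> bool" where
  "involutive_automorphism n w \<pi> \<longleftrightarrow>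
     (\<forall>i<n. \<pi> i < n \<and> \<pi> (\<pi> i) = i) \<and> (\<forall>i<n. \<forall>j<n. w (\<pi> i) (\<pi> j) = w i j)"

lemma sum_involution_reindex:
  assumes "\<forall>i<n. \<pi> i < n \<and> \<pi> (\<pi> i) = i"
  shows "(\<Sum>i<n. f (\<pi> i)) = (\<Sum>i<n. f i)"
  by (rule sum.reindex_bij_witness[of _ \<pi> \<pi>]) (use assms in auto)

lemma signless_form_automorphism:
  assumes "involutive_automorphism n w \<pi>"
  shows "signless_form n w (\<lambda>i. x (\<pi> i)) = signless_form n w x"
proof -
  have inv: "\<forall>i<n. \<pi> i < n \<and> \<pi> (\<pi> i) = i" and w: "\<forall>i<n. \<forall>j<n. w (\<pi> i) (\<pi> j) = w i j"
    using assms unfolding involutive_automorphism_def by auto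
  have "(\<Sum>i<n. \<Sum>j<n. real (w i j) * (x (\<pi> i) + x (\<pi> j))\<^sup>2)
      = (\<Sum>i<n. \<Sum>j<n. real (w (\<pi> i) (\<pi> j)) * (x (\<pi> i) + x (\<pi> j))\<^sup>2)"
    using w by simp
  also have "\<dots> = (\<Sum>i<n. \<Sum>j<n. real (w (\<pi> i) j) * (x (\<pi> i) + x j)\<^sup>2)"
    by (intro sum.cong refl sum_involution_reindex[OF inv])
  also have "\<dots> = (\<Sum>i<n. \<Sum>j<n. real (w i j) * (x i + x j)\<^sup>2)"
    by (rule sum_involution_reindex[OF inv])
  finally show ?thesis
    unfolding signless_form_def by simp
qed

lemma sqnorm_involution:
  "\<forall>i<n. \<pi> i < n \<and> \<pi> (\<pi> i) = i \<Longrightarrow> sqnorm n (\<lambda>i. x (\<pi> i)) = sqnorm n x"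
  unfolding sqnorm_def by (rule sum_involution_reindex)

text \<open>With x, also \<open>\<bar>x\<bar>\<close> and its image under \<open>\<pi>\<close> attain the Rayleigh bound; their
  sum is \<open>\<pi>\<close>-invariant.\<close>

lemma sigma1_invariant_nonneg_eigenvector:
  assumes sym: "symmetric_on n w" and "0 < n" and aut: "involutive_automorphism n w \<pi>"
  obtains y where "\<forall>i. 0 \<le> y i" and "\<exists>i<n. y i \<noteq> 0"
    and "signless_eigen n w (sigma1 n w) y" and "\<forall>i<n. y (\<pi> i) = y i"
proof -
  let ?\<rho> = "sigma1 n w"
  have inv: "\<forall>i<n. \<pi> i < n \<and> \<pi> (\<pi> i) = i"
    using aut unfolding involutive_automorphism_def by blast
  obtain x where x_nz: "\<exists>i<n. x i \<noteq> 0" and x_eigen: "signless_eigen n w ?\<rho> x"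
    using sigma1_eigenvector[OF sym \<open>0 < n\<close>] by blast
  define x1 where "x1 i = \<bar>x i\<bar>" for i
  have "sqnorm n x1 = sqnorm n x"
    unfolding x1_def sqnorm_def by simp
  then have "signless_form n w x1 = ?\<rho> * sqnorm n x1"
    using signless_form_abs_ge[of n w x] signless_form_eigen[OF sym x_eigen]
      signless_form_le_sigma1[OF sym \<open>0 < n\<close>, of x1]
    unfolding x1_def by simp
  moreover have "signless_form n w (\<lambda>i. x1 (\<pi> i)) = signless_form n w x1"
    "sqnorm n (\<lambda>i. x1 (\<pi> i)) = sqnorm n x1"
    using signless_form_automorphism[OF aut] sqnorm_involution[OF inv] by blast+
  ultimately have "signless_eigen n w ?\<rho> x1" "signless_eigen n w ?\<rho> (\<lambda>i. x1 (\<pi> i))"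
    using signless_eigen_of_maximizer[OF sym \<open>0 < n\<close>] by simp_all
  then have "signless_eigen n w ?\<rho> (\<lambda>i. x1 i + x1 (\<pi> i))"
    by (rule signless_eigen_add)
  moreover have "\<exists>i<n. x1 i + x1 (\<pi> i) \<noteq> 0"
    using x_nz unfolding x1_def by (metis abs_ge_zero abs_le_zero_iff add_nonneg_eq_0_iff)
  moreover have "\<forall>i<n. x1 (\<pi> i) + x1 (\<pi> (\<pi> i)) = x1 i + x1 (\<pi> i)"
    using inv by simp
  ultimately show ?thesis
    using that[of "\<lambda>i. x1 i + x1 (\<pi> i)"] unfolding x1_def by simp
qed

lemma involutive_automorphism_path: "involutive_automorphism L (path_g L) (\<lambda>k. L - 1 - k)"
  unfolding involutive_automorphism_def path_g_def by auto

lemma involutive_automorphism_dunion: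
  assumes "involutive_automorphism n1 H1 \<pi>"
  shows "involutive_automorphism (n1 + n2) (dunion n1 H1 H2) (\<lambda>k. if k < n1 then \<pi> k else k)"
  using assms unfolding involutive_automorphism_def dunion_def by (fastforce simp: not_le)

lemma involutive_automorphism_join1:
  assumes "involutive_automorphism N H \<pi>"
  shows "involutive_automorphism (Suc N) (join1 N H) (case_nat 0 (\<lambda>k. Suc (\<pi> k)))"
  using assms unfolding involutive_automorphism_def join1_def
  by (auto simp: less_Suc_eq_0_disj Suc_le_eq)

lemma join1_nonneg_eigen_apex_pos:
  assumes eigen: "signless_eigen (Suc N) (join1 N H) \<rho> y" and nonneg: "\<forall>i. 0 \<le> y i"
    and nz: "\<exists>i<Suc N. y i \<noteq> 0"
  shows "0 < y 0"
proof (rule ccontr)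
  assume "\<not> 0 < y 0"
  then have "y 0 = 0"
    using nonneg[rule_format, of 0] by linarith
  then have "(\<Sum>j<N. y (Suc j)) = 0"
    using eigen unfolding signless_eigen_def by (auto simp: adj_sum_join1_0 dest: spec[of _ 0])
  then have "\<forall>j<N. y (Suc j) = 0"
    using nonneg by (simp add: sum_nonneg_eq_0_iff)
  then show False
    using nz \<open>y 0 = 0\<close> by (auto simp: less_Suc_eq_0_disj)
qed

text \<open>The hypotheses are the eigenvalue equations of Q at the path vertices of
  \<open>K\<^sub>1 \<or> (P\<^sub>l \<union> H)\<close>, the apex carrying the value a. At the first maximal entry of u
  every neighbour on the path is at most as large, and the left one is strictly smaller
  (or absent, the vertex then having one path neighbour less).\<close>

lemma path_profile_max_bound:
  fixes u :: "nat \<Rightarrow> real"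
  assumes "2 \<le> l" and "0 < a" and "0 \<le> u k0"
    and eq: "\<And>k. k < l \<Longrightarrow> \<rho> * u k = a + u k + (if 0 < k then u k + u (k - 1) else 0)
                                         + (if Suc k < l then u k + u (Suc k) else 0)"
    and "k0 < l" and max: "\<And>j. j < l \<Longrightarrow> u j \<le> u k0" and first: "\<And>j. j < k0 \<Longrightarrow> u j < u k0"
  shows "(\<rho> - 5) * u k0 < a"
proof (cases "k0 = 0")
  case True
  then have "\<rho> * u k0 \<le> a + 3 * u k0"
    using eq[OF \<open>k0 < l\<close>] max[of 1] \<open>2 \<le> l\<close> by simp
  then show ?thesis
    using \<open>0 \<le> u k0\<close> \<open>0 < a\<close> by (cases "u k0 = 0") (auto simp: algebra_simps)
next
  case False
  then have "u (k0 - 1) < u k0"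
    by (intro first) simp
  moreover have "Suc k0 < l \<Longrightarrow> u (Suc k0) \<le> u k0"
    by (rule max)
  ultimately have "\<rho> * u k0 < a + 5 * u k0"
    using eq[OF \<open>k0 < l\<close>] False \<open>0 \<le> u k0\<close> by (auto split: if_splits)
  then show ?thesis
    by (simp add: algebra_simps)
qed

lemma path_profile_bound:
  fixes u :: "nat \<Rightarrow> real"
  assumes "2 \<le> l" and "0 < a" and nonneg: "\<And>k. k < l \<Longrightarrow> 0 \<le> u k"
    and eq: "\<And>k. k < l \<Longrightarrow> \<rho> * u k = a + u k + (if 0 < k then u k + u (k - 1) else 0)
                                         + (if Suc k < l then u k + u (Suc k) else 0)"
    and "k < l"
  shows "(\<rho> - 5) * u k < a"
proof -
  define M where "M = Max (u ` {..<l})"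
  have M_ge: "u j \<le> M" if "j < l" for j
    unfolding M_def using that by (intro Max_ge) auto
  have "M \<in> u ` {..<l}"
    unfolding M_def using \<open>2 \<le> l\<close> by (intro Max_in) (simp_all add: lessThan_empty_iff)
  then obtain k0 where k0: "k0 < l" "u k0 = M" and below: "\<And>j. j < k0 \<Longrightarrow> u j \<noteq> M"
    using exists_least_iff[of "\<lambda>j. j < l \<and> u j = M"] by (metis imageE lessThan_iff order.strict_trans)
  have "(\<rho> - 5) * u k0 < a"
  proof (rule path_profile_max_bound[OF assms(1,2) nonneg[OF k0(1)] eq k0(1)])
    show "u j \<le> u k0" if "j < l" for j
      using M_ge[OF that] k0(2) by simp
    show "u j < u k0" if "j < k0" for j
      using M_ge[of j] below[OF that] k0 that by fastforce
  qed
  then have "(\<rho> - 5) * M < a"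
    using k0(2) by simp
  show ?thesis
  proof (cases "\<rho> \<le> 5")
    case True
    then have "(\<rho> - 5) * u k \<le> 0"
      using nonneg[OF \<open>k < l\<close>] by (intro mult_nonpos_nonneg) auto
    then show ?thesis
      using \<open>0 < a\<close> by linarith
  next
    case False
    then have "(\<rho> - 5) * u k \<le> (\<rho> - 5) * M"
      using M_ge[OF \<open>k < l\<close>] by (intro mult_left_mono) auto
    then show ?thesis
      using \<open>(\<rho> - 5) * M < a\<close> by simp
  qed
qed

lemma path_profile_concave:
  fixes u :: "nat \<Rightarrow> real"
  assumes "2 \<le> l" and "0 < a" and "\<And>k. k < l \<Longrightarrow> 0 \<le> u k"
    and eq: "\<And>k. k < l \<Longrightarrow> \<rho> * u k = a + u k + (if 0 < k then u k + u (k - 1) else 0)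
                                         + (if Suc k < l then u k + u (Suc k) else 0)"
    and "0 < k" and "Suc k < l"
  shows "u (Suc k) - u k < u k - u (k - 1)"
  using path_profile_bound[OF assms(1-4), of k] eq[of k] assms(5,6) by (simp add: algebra_simps)

lemma concave_symmetric_increasing:
  fixes u :: "nat \<Rightarrow> real"
  assumes concave: "\<And>k. 0 < k \<Longrightarrow> Suc k < l \<Longrightarrow> u (Suc k) - u k < u k - u (k - 1)"
    and symm: "\<And>k. k < l \<Longrightarrow> u (l - 1 - k) = u k"
    and "p < q" and "2 * q < l"
  shows "u p < u q"
proof -
  define D where "D k = u (Suc k) - u k" for k
  have D_decreasing: "D j < D k" if "Suc k \<le> j" "Suc j < l" for j k
    using that
  proof (induction rule: dec_induct)
    case base
    then show ?case
      using concave[of "Suc k"] unfolding D_def by simp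
  next
    case (step j)
    then show ?case
      using concave[of "Suc j"] unfolding D_def by simp
  qed
  have D_pos: "0 < D k" if "2 * Suc k < l" for k
  proof -
    have "D (l - 2 - k) = - D k"
      using symm[of k] symm[of "Suc k"] that unfolding D_def
      by (simp add: Suc_diff_Suc numeral_2_eq_2)
    moreover have "D (l - 2 - k) < D k"
      using that by (intro D_decreasing) auto
    ultimately show ?thesis
      by simp
  qed
  have "Suc p \<le> q"
    using \<open>p < q\<close> by simp
  then show ?thesis
    using \<open>2 * q < l\<close>
  proof (induction rule: dec_induct)
    case base
    then show ?case
      using D_pos[of p] unfolding D_def by simp
  next
    case (step q)
    then show ?case
      using D_pos[of q] unfolding D_def by simp
  qed
qed

lemma adj_sum_join1_path:
  assumes "k < l"
  shows "adj_sum (Suc (l + m)) (join1 (l + m) (dunion l (path_g l) H)) x (Suc k)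
    = x 0 + (if 0 < k then x k else 0) + (if Suc k < l then x (Suc (Suc k)) else 0)"
  using assms by (simp add: adj_sum_join1_Suc adj_sum_dunion_left adj_sum_path)

lemma adj_sum_join1_cycle_path:
  assumes "k < L" and "N = s + (L + m)"
  shows "adj_sum (Suc N) (join1 N (dunion s C (dunion L (path_g L) H))) x (Suc (s + k))
    = x 0 + (if 0 < k then x (s + k) else 0) + (if Suc k < L then x (Suc (Suc (s + k))) else 0)"
  using assms by (simp add: adj_sum_join1_Suc adj_sum_dunion_left adj_sum_dunion_right adj_sum_path)

lemma path_join_perron_vector:
  assumes "2 \<le> l" and "symmetric_on m w1"
  defines "G \<equiv> join1 (l + m) (dunion l (path_g l) w1)"
  obtains y where "0 < y 0"
    and "signless_eigen (Suc (l + m)) G (sigma1 (Suc (l + m)) G) y"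
    and "\<And>k. k < l \<Longrightarrow> y (l - k) = y (Suc k)"
    and "\<And>p q. p < q \<Longrightarrow> 2 * q < l \<Longrightarrow> y (Suc p) < y (Suc q)"
proof -
  let ?n = "Suc (l + m)"
  let ?\<rho> = "sigma1 ?n G"
  have sym: "symmetric_on ?n G"
    unfolding G_def using assms(2) by (rule symmetric_on_path_join)
  define \<pi> where "\<pi> = case_nat 0 (\<lambda>k. Suc (if k < l then l - 1 - k else k))"
  have "involutive_automorphism ?n G \<pi>"
    unfolding G_def \<pi>_def
    by (intro involutive_automorphism_join1 involutive_automorphism_dunion involutive_automorphism_path)
  then obtain y where nonneg: "\<forall>i. 0 \<le> y i" and nz: "\<exists>i<?n. y i \<noteq> 0"
    and eigen: "signless_eigen ?n G ?\<rho> y" and inv: "\<forall>i<?n. y (\<pi> i) = y i"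
    using sigma1_invariant_nonneg_eigenvector[OF sym] by blast
  have apex: "0 < y 0"
    using join1_nonneg_eigen_apex_pos eigen nonneg nz unfolding G_def by blast
  have symm: "y (l - k) = y (Suc k)" if "k < l" for k
    using inv[rule_format, of "Suc k"] that by (simp add: \<pi>_def Suc_diff_Suc)
  define u where "u k = y (Suc k)" for k
  have path_eq: "?\<rho> * u k = y 0 + u k + (if 0 < k then u k + u (k - 1) else 0)
      + (if Suc k < l then u k + u (Suc k) else 0)" if "k < l" for k
    using signless_eigenD[OF eigen, of "Suc k"] that
    unfolding G_def u_def adj_sum_join1_path[OF that]
    by (auto simp: algebra_simps)
  have "u p < u q" if "p < q" "2 * q < l" for p q
  proof (rule concave_symmetric_increasing[OF _ _ that])
    show "u (Suc k) - u k < u k - u (k - 1)" if "0 < k" "Suc k < l" for k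
      by (rule path_profile_concave[OF \<open>2 \<le> l\<close> apex _ path_eq that]) (simp add: u_def nonneg)
    show "u (l - 1 - k) = u k" if "k < l" for k
      using symm[OF that] that by (simp add: u_def Suc_diff_Suc)
  qed
  then show ?thesis
    using that apex eigen symm unfolding u_def by blast
qed

definition rotate_prefix :: "nat \<Rightarrow> nat \<Rightarrow> nat \<Rightarrow> nat" where
  "rotate_prefix s i k = (if k < s then k + i else if k < s + i then k - s else k)"

text \<open>The test vector on \<open>K\<^sub>1 \<or> (C\<^sub>s \<union> P\<^bsub>l-s\<^esub> \<union> G\<^sub>1)\<close> built from a vector y on
  \<open>K\<^sub>1 \<or> (P\<^sub>l \<union> G\<^sub>1)\<close>: the cycle carries the values of the path segment \<open>[i, i + s)\<close>,
  the new path those of \<open>[0, i)\<close> followed by \<open>[i + s, l)\<close> (path positions counted from 0).\<close>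

definition cut_vector :: "nat \<Rightarrow> nat \<Rightarrow> (nat \<Rightarrow> real) \<Rightarrow> nat \<Rightarrow> real" where
  "cut_vector s i y = case_nat (y 0) (\<lambda>k. y (Suc (rotate_prefix s i k)))"

lemma bij_betw_rotate_prefix:
  assumes "s + i \<le> N"
  shows "bij_betw (rotate_prefix s i) {..<N} {..<N}"
  by (rule bij_betw_byWitness[where f' = "\<lambda>k. if k < i then k + s else if k < s + i then k - i else k"])
    (use assms in \<open>auto simp: rotate_prefix_def\<close>)

lemma sqnorm_cut_vector:
  assumes "s + i \<le> N"
  shows "sqnorm (Suc N) (cut_vector s i y) = sqnorm (Suc N) y"
  using sum.reindex_bij_betw[OF bij_betw_rotate_prefix[OF assms], of "\<lambda>k. (y (Suc k))\<^sup>2"]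
  unfolding sqnorm_def sum.lessThan_Suc_shift by (simp add: cut_vector_def)

lemma chain_sum_cut_cycle:
  assumes "as \<noteq> []" and "bs \<noteq> []" and "cs \<noteq> []"
  shows "chain_sum (bs @ [hd bs]) + chain_sum (as @ cs)
    = chain_sum (as @ bs @ cs) + 2 * (last bs - last as) * (hd bs - hd cs)"
  using assms by (simp add: chain_sum_append power2_eq_square algebra_simps)

lemma signless_form_cycle_path_union:
  assumes "2 \<le> s" and "s \<le> l"
  shows "signless_form (l + m) (dunion s (cycle_g s) (dunion (l - s) (path_g (l - s)) w1)) x
    = chain_sum (map x [0..<s] @ [x 0]) + chain_sum (map x [s..<l]) + signless_form m w1 (\<lambda>j. x (l + j))"
proof -
  have "l + m = s + (l - s + m)"
    using assms(2) by simp
  then have "signless_form (l + m) (dunion s (cycle_g s) (dunion (l - s) (path_g (l - s)) w1)) x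
      = signless_form (s + (l - s + m)) (dunion s (cycle_g s) (dunion (l - s) (path_g (l - s)) w1)) x"
    by (simp only:)
  also have "\<dots> = chain_sum (map x [0..<s] @ [x 0]) + chain_sum (map (\<lambda>j. x (s + j)) [0..<l - s])
      + signless_form m w1 (\<lambda>j. x (s + (l - s + j)))"
    by (simp add: signless_form_dunion signless_form_cycle[OF assms(1)] signless_form_path)
  also have "map (\<lambda>j. x (s + j)) [0..<l - s] = map x [s..<l]"
    by (rule nth_equalityI) simp_all
  also have "(\<lambda>j. x (s + (l - s + j))) = (\<lambda>j. x (l + j))"
    using assms(2) by simp
  finally show ?thesis .
qed

lemma signless_form_cut_vector:
  assumes "2 \<le> s" and "0 < i" and "i + s < l"
  shows "signless_form (Suc (l + m))
      (join1 (l + m) (dunion s (cycle_g s) (dunion (l - s) (path_g (l - s)) w1))) (cut_vector s i y)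
    = signless_form (Suc (l + m)) (join1 (l + m) (dunion l (path_g l) w1)) y
      + 2 * (y (i + s) - y i) * (y (Suc i) - y (Suc (i + s)))"
proof -
  define u where "u k = y (Suc k)" for k
  define v where "v k = u (rotate_prefix s i k)" for k
  have apex: "(\<Sum>j<l + m. (y 0 + y (Suc (rotate_prefix s i j)))\<^sup>2) = (\<Sum>j<l + m. (y 0 + y (Suc j))\<^sup>2)"
    using sum.reindex_bij_betw[OF bij_betw_rotate_prefix, of s i "l + m" "\<lambda>j. (y 0 + y (Suc j))\<^sup>2"] assms(3)
    by simp
  have rest: "signless_form m w1 (\<lambda>j. v (l + j)) = signless_form m w1 (\<lambda>j. u (l + j))"
    using assms(3) by (simp add: v_def rotate_prefix_def)
  have B: "map v [0..<s] = map u [i..<i + s]"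
    by (rule nth_equalityI) (simp_all add: v_def rotate_prefix_def add.commute)
  have AC: "map v [s..<l] = map u [0..<i] @ map u [i + s..<l]"
    using assms(3) by (intro nth_equalityI) (auto simp: v_def rotate_prefix_def nth_append)
  have "[0..<l] = [0..<i] @ [i..<l]" "[i..<l] = [i..<i + s] @ [i + s..<l]"
    using upt_add_eq_append[of 0 i "l - i"] upt_add_eq_append[of i "i + s" "l - (i + s)"] assms(3)
    by simp_all
  then have ABC: "map u [0..<l] = map u [0..<i] @ map u [i..<i + s] @ map u [i + s..<l]"
    by simp
  have "chain_sum (map v [0..<s] @ [v 0]) + chain_sum (map v [s..<l])
      = chain_sum (map u [0..<l]) + 2 * (y (i + s) - y i) * (y (Suc i) - y (Suc (i + s)))"
    unfolding B AC ABC using assms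
      chain_sum_cut_cycle[of "map u [0..<i]" "map u [i..<i + s]" "map u [i + s..<l]"]
    by (simp add: u_def last_map hd_map v_def rotate_prefix_def)
  moreover have "(\<lambda>j. y (Suc j)) = u" "(\<lambda>j. y (Suc (rotate_prefix s i j))) = v"
    by (simp_all add: fun_eq_iff u_def v_def)
  moreover have "s \<le> l"
    using assms(3) by simp
  ultimately show ?thesis
    using apex rest signless_form_cycle_path_union[OF assms(1) \<open>s \<le> l\<close>, of m w1 v]
    unfolding signless_form_join1 cut_vector_def
    by (simp add: signless_form_dunion signless_form_path u_def)
qed

text \<open>The eigenvalue equations at the path vertex carrying \<open>y i\<close> (vertex i of the first
  graph, vertex \<open>s + i\<close> of the second) differ only in the right-hand neighbour.\<close>

lemma cut_vector_eigen_imp_eq: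
  assumes "2 \<le> s" and "0 < i" and "i + s < l"
    and eigen: "signless_eigen (Suc (l + m)) (join1 (l + m) (dunion l (path_g l) w1)) \<rho> y"
    and eigen': "signless_eigen (Suc (l + m))
      (join1 (l + m) (dunion s (cycle_g s) (dunion (l - s) (path_g (l - s)) w1))) \<rho> (cut_vector s i y)"
  shows "y (Suc i) = y (Suc (i + s))"
proof -
  define k where "k = i - 1"
  have k: "i = Suc k" "k < l" "k < l - s"
    using assms(2,3) unfolding k_def by auto
  have sizes: "l + m = s + (l - s + m)"
    using assms(3) by simp
  let ?z = "cut_vector s i y"
  have z_path: "?z 0 = y 0" "?z (Suc (s + k)) = y (Suc k)" "?z (Suc (Suc (s + k))) = y (Suc (Suc (s + k)))"
    using k by (simp_all add: cut_vector_def rotate_prefix_def)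
  have z_left: "?z (s + k) = y k" if pos: "0 < k"
  proof -
    obtain j where j: "s + k = Suc j"
      using pos by (cases "s + k") auto
    moreover have "rotate_prefix s i j = k - 1"
      using j pos k unfolding rotate_prefix_def by auto
    ultimately show ?thesis
      using pos by (simp add: cut_vector_def)
  qed
  have "\<rho> * y (Suc k)
      = (2 + (if 0 < k then 1 else 0)) * y (Suc k) + y 0 + (if 0 < k then y k else 0) + y (Suc i)"
    using signless_eigenD[OF eigen, of "Suc k"] k assms(3)
    unfolding adj_sum_join1_path[OF k(2)] by auto
  moreover have "\<rho> * y (Suc k)
      = (2 + (if 0 < k then 1 else 0)) * y (Suc k) + y 0 + (if 0 < k then y k else 0) + y (Suc (i + s))"
    using signless_eigenD[OF eigen', of "Suc (s + k)"] k assms(3) z_path z_left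
    unfolding adj_sum_join1_cycle_path[OF k(3) sizes] by (auto simp: add.commute)
  ultimately show ?thesis
    by simp
qed

text \<open>With \<open>i = \<lceil>(l - s) / 2\<rceil>\<close> the segment \<open>[i, i + s)\<close> is centred on the path, so
  symmetry and monotonicity of y compare the values at the two ends of the cut.\<close>

lemma centred_cut:
  fixes y :: "nat \<Rightarrow> real"
  assumes "2 \<le> s" and "s + 2 \<le> l"
    and symm: "\<And>k. k < l \<Longrightarrow> y (l - k) = y (Suc k)"
    and mono: "\<And>p q. p < q \<Longrightarrow> 2 * q < l \<Longrightarrow> y (Suc p) < y (Suc q)"
  defines "i \<equiv> (l - s + 1) div 2"
  shows "0 < i" and "i + s < l" and "y i \<le> y (i + s)" and "y (Suc (i + s)) < y (Suc i)"
proof -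
  have i: "0 < i" "i + s < l" "l - s \<le> 2 * i" "2 * i \<le> l - s + 1"
    using assms(1,2) unfolding i_def by auto
  then show "0 < i" and "i + s < l"
    by simp_all
  have "y (Suc (l - 1 - (i + s))) < y (Suc i)"
    using assms(1) i by (intro mono) auto
  moreover have "Suc (l - 1 - (i + s)) = l - (i + s)"
    using i by simp
  ultimately show "y (Suc (i + s)) < y (Suc i)"
    using symm[of "i + s"] i by simp
  have "i - 1 \<le> l - (i + s)" and "2 * (l - (i + s)) < l"
    using i assms(1) by auto
  then have "y (Suc (i - 1)) \<le> y (Suc (l - (i + s)))"
    using mono[of "i - 1" "l - (i + s)"] by (cases "i - 1 = l - (i + s)") auto
  moreover have "y (i + s) = y (Suc (l - (i + s)))"
    using symm[of "i + s - 1"] i by (simp add: Suc_diff_le)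
  ultimately show "y i \<le> y (i + s)"
    using i by simp
qed

lemma sigma1_path_join_lt_cycle_path_join:
  assumes "2 \<le> s" and "s + 2 \<le> l" and "symmetric_on m w1"
  shows "sigma1 (Suc (l + m)) (join1 (l + m) (dunion l (path_g l) w1))
       < sigma1 (Suc (l + m)) (join1 (l + m) (dunion s (cycle_g s) (dunion (l - s) (path_g (l - s)) w1)))"
proof -
  define n where "n = Suc (l + m)"
  then have n_pos: "0 < n"
    by simp
  define G where "G = join1 (l + m) (dunion l (path_g l) w1)"
  define G' where "G' = join1 (l + m) (dunion s (cycle_g s) (dunion (l - s) (path_g (l - s)) w1))"
  have sym: "symmetric_on n G" and sym': "symmetric_on n G'"
    unfolding n_def G_def G'_def using assms
    by (auto intro: symmetric_on_path_join symmetric_on_cycle_path_join)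
  have "2 \<le> l"
    using assms(1,2) by simp
  obtain y where apex: "0 < y 0" and eigen: "signless_eigen n G (sigma1 n G) y"
    and symm: "\<And>k. k < l \<Longrightarrow> y (l - k) = y (Suc k)"
    and mono: "\<And>p q. p < q \<Longrightarrow> 2 * q < l \<Longrightarrow> y (Suc p) < y (Suc q)"
    using path_join_perron_vector[OF \<open>2 \<le> l\<close> assms(3)] unfolding n_def G_def by blast
  define i where "i = (l - s + 1) div 2"
  have i: "0 < i" "i + s < l" and "y i \<le> y (i + s)" and gap: "y (Suc (i + s)) < y (Suc i)"
    using centred_cut[OF assms(1,2) symm mono] unfolding i_def by auto
  define z where "z = cut_vector s i y"
  have "sqnorm n z = sqnorm n y"
    unfolding n_def z_def using i by (intro sqnorm_cut_vector) simp
  moreover have "0 < sqnorm n y"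
    using apex unfolding sqnorm_pos_iff n_def by auto
  ultimately have "0 < sqnorm n z"
    by simp
  have "0 \<le> 2 * (y (i + s) - y i) * (y (Suc i) - y (Suc (i + s)))"
    using \<open>y i \<le> y (i + s)\<close> gap by simp
  then have "sigma1 n G * sqnorm n z \<le> signless_form n G' z"
    using signless_form_cut_vector[OF assms(1) i] signless_form_eigen[OF sym eigen]
      \<open>sqnorm n z = sqnorm n y\<close>
    unfolding n_def G_def G'_def z_def by simp
  note rayleigh = sigma1_test_vector[OF sym' n_pos \<open>0 < sqnorm n z\<close> this]
  have "sigma1 n G \<noteq> sigma1 n G'"
  proof
    assume "sigma1 n G = sigma1 n G'"
    then have "signless_eigen n G' (sigma1 n G) z"
      by (rule rayleigh(2))
    then have "y (Suc i) = y (Suc (i + s))"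
      unfolding n_def G_def G'_def z_def
      by (rule cut_vector_eigen_imp_eq[OF assms(1) i eigen[unfolded n_def G_def]])
    then show False
      using gap by simp
  qed
  with rayleigh(1) show ?thesis
    unfolding n_def G_def G'_def by simp
qed

theorem lemma3p7:
  fixes l m :: nat and w1 :: "nat \<Rightarrow> nat \<Rightarrow> nat"
  assumes "l \<ge> 4" and "multigraph m w1"
  shows "(l \<ge> 5 \<longrightarrow> (\<forall>s. 3 \<le> s \<and> s \<le> l - 2 \<longrightarrow>
            sigma1 (1 + l + m) (join1 (l + m) (dunion l (path_g l) w1))
          < sigma1 (1 + l + m) (join1 (l + m) (dunion s (cycle_g s) (dunion (l - s) (path_g (l - s)) w1)))))
       \<and> (l = 4 \<longrightarrow>
            sigma1 (1 + l + m) (join1 (l + m) (dunion l (path_g l) w1))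
          < sigma1 (1 + l + m) (join1 (l + m) (dunion 2 (cycle_g 2) (dunion 2 (path_g 2) w1))))"
proof -
  note less = sigma1_path_join_lt_cycle_path_join[OF _ _ symmetric_on_multigraph[OF assms(2)]]
  have "1 + l + m = Suc (l + m)"
    by simp
  then show ?thesis
    using assms(1) less[of 2 4] by (simp only:) (intro conjI impI allI less; auto)
qed

end
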